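(* The intuitionistic modal logic $\mathsf{KM}\oplus\mathsf{LC}$ is exactly the set of formulas valid in the Kripke frame $(\omega,\ge,>)$, i.e. with worlds the natural numbers, intuitionistic order $m\unlhd n$ iff $m\ge n$, and modal accessibility $m\prec n$ iff $m>n$.
   Context: Formulas are built from variables, $\bot,\to,\wedge,\vee,\Box$. In a frame $(W,\unlhd,\prec)$, valuations assign $\unlhd$-upward closed sets to variables, connectives are interpreted in the Heyting algebra of upsets, and $\Box A=\{w\mid\forall x(w\prec x\Rightarrow x\in A)\}$; validity means denoting $W$ under every valuation. $\mathsf{KM}\oplus\mathsf{LC}$ is the smallest set of formulas containing all axioms of intuitionistic propositional logic, $\Box(A\to B)\to(\Box A\to\Box B)$, $(\Box A\to A)\to A$, $\Box A\to((B\to A)\vee B)$ and $(A\to B)\vee(B\to A)$, closed under modus ponens, necessitation and substitution. *)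

theory Defs
  imports Main
begin

datatype fm =
    Var nat
  | Bot
  | Imp fm fm
  | And fm fm
  | Or fm fm
  | Box fm

primrec subst :: "(nat \<Rightarrow> fm) \<Rightarrow> fm \<Rightarrow> fm" where
  "subst s (Var p) = s p"
| "subst s Bot = Bot"
| "subst s (Imp A B) = Imp (subst s A) (subst s B)"
| "subst s (And A B) = And (subst s A) (subst s B)"
| "subst s (Or A B) = Or (subst s A) (subst s B)"
| "subst s (Box A) = Box (subst s A)"

inductive KM_LC :: "fm \<Rightarrow> bool" where
  ax_K1: "KM_LC (Imp A (Imp B A))"
| ax_S: "KM_LC (Imp (Imp A (Imp B C)) (Imp (Imp A B) (Imp A C)))"
| ax_and1: "KM_LC (Imp (And A B) A)"
| ax_and2: "KM_LC (Imp (And A B) B)"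
| ax_andI: "KM_LC (Imp A (Imp B (And A B)))"
| ax_or1: "KM_LC (Imp A (Or A B))"
| ax_or2: "KM_LC (Imp B (Or A B))"
| ax_orE: "KM_LC (Imp (Imp A C) (Imp (Imp B C) (Imp (Or A B) C)))"
| ax_bot: "KM_LC (Imp Bot A)"
| ax_boxK: "KM_LC (Imp (Box (Imp A B)) (Imp (Box A) (Box B)))"
| ax_loeb: "KM_LC (Imp (Imp (Box A) A) A)"
| ax_KM: "KM_LC (Imp (Box A) (Or (Imp B A) B))"
| ax_LC: "KM_LC (Or (Imp A B) (Imp B A))"
| mp: "KM_LC (Imp A B) \<Longrightarrow> KM_LC A \<Longrightarrow> KM_LC B"
| nec: "KM_LC A \<Longrightarrow> KM_LC (Box A)"
| sub: "KM_LC A \<Longrightarrow> KM_LC (subst s A)"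

primrec sem :: "('w \<Rightarrow> 'w \<Rightarrow> bool) \<Rightarrow> ('w \<Rightarrow> 'w \<Rightarrow> bool) \<Rightarrow> (nat \<Rightarrow> 'w set) \<Rightarrow> fm \<Rightarrow> 'w set" where
  "sem le R V (Var p) = V p"
| "sem le R V Bot = {}"
| "sem le R V (Imp A B) = {w. \<forall>v. le w v \<longrightarrow> v \<in> sem le R V A \<longrightarrow> v \<in> sem le R V B}"
| "sem le R V (And A B) = sem le R V A \<inter> sem le R V B"
| "sem le R V (Or A B) = sem le R V A \<union> sem le R V B"
| "sem le R V (Box A) = {w. \<forall>x. R w x \<longrightarrow> x \<in> sem le R V A}"

definition upset :: "('w \<Rightarrow> 'w \<Rightarrow> bool) \<Rightarrow> 'w set \<Rightarrow> bool" where
  "upset le U \<longleftrightarrow> (\<forall>w v. w \<in> U \<longrightarrow> le w v \<longrightarrow> v \<in> U)"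

definition valid_in :: "('w \<Rightarrow> 'w \<Rightarrow> bool) \<Rightarrow> ('w \<Rightarrow> 'w \<Rightarrow> bool) \<Rightarrow> fm \<Rightarrow> bool" where
  "valid_in le R A \<longleftrightarrow> (\<forall>V. (\<forall>p. upset le (V p)) \<longrightarrow> sem le R V A = UNIV)"

definition omega_le :: "nat \<Rightarrow> nat \<Rightarrow> bool" where "omega_le m n \<longleftrightarrow> m \<ge> n"
definition omega_R :: "nat \<Rightarrow> nat \<Rightarrow> bool" where "omega_R m n \<longleftrightarrow> m > n"

end

theory Submission
  imports Defs
begin

text \<open>Soundness is checked frame by frame: the intuitionistic and K axioms hold in every frame
  whose accessibility is compatible with the order, the Loeb axiom holds on \<open>\<omega>\<close> because
  \<open>>\<close> is well-founded, KM because \<open>>\<close> is the strict part of \<open>\<ge>\<close>, and LC because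
  \<open>\<ge>\<close> is linear.

  For completeness, extend a non-theorem \<open>A\<close> to a prime theory \<open>F\<close> avoiding \<open>A\<close>. By LC,
  \<open>B \<preceq> C \<longleftrightarrow> (B \<rightarrow> C) \<in> F\<close> is a total preorder, and by KM and Loeb, \<open>Box B\<close> is
  the immediate successor of \<open>B\<close> whenever \<open>B \<notin> F\<close>. The height of a formula, the number
  of \<open>\<preceq>\<close>-classes of subformulas of \<open>A\<close> strictly below it, therefore turns the connectives
  into min, max, the Goedel implication and the capped successor. These are exactly the
  operations of the frame \<open>\<omega>\<close> on initial segments, so on the worlds below the top height every
  subformula is true precisely at the worlds below its height; \<open>A\<close>, of height below the top,
  fails.\<close>

section \<open>Soundness\<close>

lemma sem_subst: "sem le R V (subst s A) = sem le R (\<lambda>p. sem le R V (s p)) A"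
  by (induction A) auto

locale kripke_frame =
  fixes le :: "'w \<Rightarrow> 'w \<Rightarrow> bool" and R :: "'w \<Rightarrow> 'w \<Rightarrow> bool"
  assumes le_refl: "le w w"
    and le_trans: "le u v \<Longrightarrow> le v w \<Longrightarrow> le u w"
    and le_R_trans: "le u v \<Longrightarrow> R v w \<Longrightarrow> R u w"
begin

abbreviation valuation :: "(nat \<Rightarrow> 'w set) \<Rightarrow> bool" where
  "valuation V \<equiv> \<forall>p. upset le (V p)"

lemma upset_sem: "valuation V \<Longrightarrow> upset le (sem le R V A)"
  by (induction A) (auto simp: upset_def intro: le_trans le_R_trans)

lemma sem_persistent: "valuation V \<Longrightarrow> w \<in> sem le R V A \<Longrightarrow> le w v \<Longrightarrow> v \<in> sem le R V A"
  using upset_sem unfolding upset_def by blast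

lemma valid_intuitionistic_axioms:
  shows "valid_in le R (Imp A (Imp B A))"
    and "valid_in le R (Imp (Imp A (Imp B C)) (Imp (Imp A B) (Imp A C)))"
    and "valid_in le R (Imp (And A B) A)"
    and "valid_in le R (Imp (And A B) B)"
    and "valid_in le R (Imp A (Imp B (And A B)))"
    and "valid_in le R (Imp A (Or A B))"
    and "valid_in le R (Imp B (Or A B))"
    and "valid_in le R (Imp (Imp A C) (Imp (Imp B C) (Imp (Or A B) C)))"
    and "valid_in le R (Imp Bot A)"
  unfolding valid_in_def
  by (auto intro: sem_persistent le_trans) (auto 0 4 intro: le_refl le_trans)

lemma valid_K: "valid_in le R (Imp (Box (Imp A B)) (Imp (Box A) (Box B)))"
  unfolding valid_in_def by (auto intro: le_refl le_R_trans)

lemma valid_ImpI: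
  assumes "\<And>V w. valuation V \<Longrightarrow> w \<in> sem le R V A \<Longrightarrow> w \<in> sem le R V B"
  shows "valid_in le R (Imp A B)"
  unfolding valid_in_def using assms sem_persistent by auto

lemma valid_mp:
  assumes "valid_in le R (Imp A B)" and "valid_in le R A"
  shows "valid_in le R B"
  unfolding valid_in_def
proof (intro allI impI)
  fix V assume "valuation V"
  with assms have "sem le R V (Imp A B) = UNIV" and "sem le R V A = UNIV"
    unfolding valid_in_def by blast+
  then show "sem le R V B = UNIV" using le_refl by auto
qed

lemma valid_Box: "valid_in le R A \<Longrightarrow> valid_in le R (Box A)"
  unfolding valid_in_def by simp

lemma valid_subst:
  assumes "valid_in le R A"
  shows "valid_in le R (subst s A)"
  unfolding valid_in_def sem_subst
proof (intro allI impI)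
  fix V assume "valuation V"
  then have "valuation (\<lambda>p. sem le R V (s p))" using upset_sem by blast
  then show "sem le R (\<lambda>p. sem le R V (s p)) A = UNIV"
    using assms unfolding valid_in_def by metis
qed

end

interpretation omega: kripke_frame omega_le omega_R
  by unfold_locales (auto simp: omega_le_def omega_R_def)

abbreviation sem_omega :: "(nat \<Rightarrow> nat set) \<Rightarrow> fm \<Rightarrow> nat set" where
  "sem_omega \<equiv> sem omega_le omega_R"

lemma sem_omega_Imp [simp]:
  "w \<in> sem_omega V (Imp A B) \<longleftrightarrow> (\<forall>v\<le>w. v \<in> sem_omega V A \<longrightarrow> v \<in> sem_omega V B)"
  by (auto simp: omega_le_def)

lemma sem_omega_Box [simp]: "w \<in> sem_omega V (Box A) \<longleftrightarrow> (\<forall>v<w. v \<in> sem_omega V A)"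
  by (simp add: omega_R_def)

declare sem.simps(3,6) [simp del]

lemma sem_omega_downward:
  "omega.valuation V \<Longrightarrow> w \<in> sem_omega V A \<Longrightarrow> v \<le> w \<Longrightarrow> v \<in> sem_omega V A"
  using omega.sem_persistent unfolding omega_le_def by blast

lemma omega_valid_loeb: "valid_in omega_le omega_R (Imp (Imp (Box A) A) A)"
proof (rule omega.valid_ImpI)
  fix V v assume V: "omega.valuation V" and v: "v \<in> sem_omega V (Imp (Box A) A)"
  from v show "v \<in> sem_omega V A"
  proof (induction v rule: less_induct)
    case (less v)
    have "u \<in> sem_omega V A" if "u < v" for u
      using less.IH[OF that] sem_omega_downward[OF V less.prems less_imp_le[OF that]] .
    then have "v \<in> sem_omega V (Box A)" by simp
    with less.prems show ?case by simp
  qed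
qed

lemma omega_valid_KM: "valid_in omega_le omega_R (Imp (Box A) (Or (Imp B A) B))"
proof (rule omega.valid_ImpI)
  fix V w assume "w \<in> sem_omega V (Box A)"
  then have "w \<in> sem_omega V (Imp B A) \<or> w \<in> sem_omega V B"
    by (auto simp: le_less)
  then show "w \<in> sem_omega V (Or (Imp B A) B)" by simp
qed

lemma omega_valid_LC: "valid_in omega_le omega_R (Or (Imp A B) (Imp B A))"
  unfolding valid_in_def
proof (intro allI impI)
  fix V assume V: "omega.valuation V"
  have "w \<in> sem_omega V (Imp A B) \<or> w \<in> sem_omega V (Imp B A)" for w
  proof (rule ccontr)
    assume "\<not> ?thesis"
    then obtain u u' where "u \<in> sem_omega V A" "u \<notin> sem_omega V B"
      and "u' \<in> sem_omega V B" "u' \<notin> sem_omega V A"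
      by auto
    then show False
      using nat_le_linear[of u u'] sem_omega_downward[OF V] by blast
  qed
  then show "sem_omega V (Or (Imp A B) (Imp B A)) = UNIV"
    unfolding sem.simps(5) by blast
qed

lemma KM_LC_sound: "KM_LC A \<Longrightarrow> valid_in omega_le omega_R A"
proof (induction rule: KM_LC.induct)
  case (mp A B)
  from mp.IH show ?case by (rule omega.valid_mp)
next
  case (nec A)
  from nec.IH show ?case by (rule omega.valid_Box)
next
  case (sub A s)
  from sub.IH show ?case by (rule omega.valid_subst)
qed (rule omega.valid_intuitionistic_axioms omega.valid_K
    omega_valid_loeb omega_valid_KM omega_valid_LC)+

section \<open>The frame \<open>\<omega>\<close> on initial segments\<close>

lemma sem_omega_initial_iff:
  assumes "sem_omega V B \<inter> {..<M} = {..<b}" and "v < M"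
  shows "v \<in> sem_omega V B \<longleftrightarrow> v < b"
  using assms by (metis Int_iff lessThan_iff)

lemma sem_omega_And_initial:
  assumes "sem_omega V B \<inter> {..<M} = {..<b}" and "sem_omega V C \<inter> {..<M} = {..<c}"
  shows "sem_omega V (And B C) \<inter> {..<M} = {..<min b c}"
proof -
  have "sem_omega V (And B C) \<inter> {..<M} = (sem_omega V B \<inter> {..<M}) \<inter> (sem_omega V C \<inter> {..<M})"
    by auto
  also have "\<dots> = {..<min b c}" unfolding assms by auto
  finally show ?thesis .
qed

lemma sem_omega_Or_initial:
  assumes "sem_omega V B \<inter> {..<M} = {..<b}" and "sem_omega V C \<inter> {..<M} = {..<c}"
  shows "sem_omega V (Or B C) \<inter> {..<M} = {..<max b c}"
proof -
  have "sem_omega V (Or B C) \<inter> {..<M} = (sem_omega V B \<inter> {..<M}) \<union> (sem_omega V C \<inter> {..<M})"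
    by auto
  also have "\<dots> = {..<max b c}" unfolding assms by auto
  finally show ?thesis .
qed

lemma sem_omega_Imp_initial:
  assumes B: "sem_omega V B \<inter> {..<M} = {..<b}" and C: "sem_omega V C \<inter> {..<M} = {..<c}"
  shows "sem_omega V (Imp B C) \<inter> {..<M} = {..<if b \<le> c then M else c}"
proof -
  have "c \<le> M" using C by (metis Int_lower2 lessThan_subset_iff)
  have Imp_iff: "w \<in> sem_omega V (Imp B C) \<longleftrightarrow> (\<forall>v\<le>w. v < b \<longrightarrow> v < c)" if "w < M" for w
    using that sem_omega_initial_iff[OF B] sem_omega_initial_iff[OF C] by (simp add: le_less_trans)
  show ?thesis
  proof (cases "b \<le> c")
    case True
    then show ?thesis using Imp_iff by (auto simp: less_le_trans)
  next
    case False
    then have "(\<forall>v\<le>w. v < b \<longrightarrow> v < c) \<longleftrightarrow> w < c" for w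
      by (meson le_less_trans not_le order_refl)
    then show ?thesis using Imp_iff False \<open>c \<le> M\<close> by auto
  qed
qed

lemma sem_omega_Box_initial:
  assumes "sem_omega V B \<inter> {..<M} = {..<b}"
  shows "sem_omega V (Box B) \<inter> {..<M} = {..<min M (Suc b)}"
proof -
  have "w \<in> sem_omega V (Box B) \<longleftrightarrow> w \<le> b" if "w < M" for w
    using that sem_omega_initial_iff[OF assms]
    by (auto simp: less_trans) (metis not_le_imp_less less_irrefl)
  then show ?thesis by auto
qed

section \<open>Derivations from hypotheses\<close>

lemma KM_LC_Imp_refl: "KM_LC (Imp A A)"
  using mp[OF mp[OF ax_S ax_K1] ax_K1] .

inductive derives :: "fm set \<Rightarrow> fm \<Rightarrow> bool" for T where
  derives_hyp: "B \<in> T \<Longrightarrow> derives T B"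
| derives_thm: "KM_LC B \<Longrightarrow> derives T B"
| derives_mp: "derives T (Imp B C) \<Longrightarrow> derives T B \<Longrightarrow> derives T C"

lemma derives_mono: "derives T B \<Longrightarrow> T \<subseteq> T' \<Longrightarrow> derives T' B"
  by (induction rule: derives.induct) (auto intro: derives.intros)

lemma derives_empty_iff: "derives {} B \<longleftrightarrow> KM_LC B"
proof
  show "derives {} B \<Longrightarrow> KM_LC B"
    by (induction rule: derives.induct) (auto intro: mp)
qed (rule derives_thm)

lemma derives_deduction: "derives (insert A T) B \<Longrightarrow> derives T (Imp A B)"
proof (induction rule: derives.induct)
  case (derives_hyp B)
  then show ?case
    by (auto intro: derives.intros KM_LC_Imp_refl
        derives.derives_mp[OF derives.derives_thm[OF ax_K1]])
next
  case (derives_thm B)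
  then show ?case
    by (auto intro: derives.intros derives.derives_mp[OF derives.derives_thm[OF ax_K1]])
next
  case (derives_mp B C)
  then show ?case
    by (blast intro: derives.derives_mp derives.derives_mp[OF derives.derives_thm[OF ax_S]])
qed

lemma derives_compact: "derives T B \<Longrightarrow> \<exists>T'. finite T' \<and> T' \<subseteq> T \<and> derives T' B"
proof (induction rule: derives.induct)
  case (derives_hyp B)
  then show ?case by (intro exI[of _ "{B}"]) (simp add: derives.derives_hyp)
next
  case (derives_thm B)
  then show ?case by (intro exI[of _ "{}"]) (simp add: derives.derives_thm)
next
  case (derives_mp B C)
  then obtain T1 T2 where "finite T1" "T1 \<subseteq> T" "derives T1 (Imp B C)"
    and "finite T2" "T2 \<subseteq> T" "derives T2 B" by blast
  then show ?case
    by (intro exI[of _ "T1 \<union> T2"]) (auto intro: derives.derives_mp derives_mono)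
qed

text \<open>Necessitation applies under hypotheses: for \<open>X = Box B \<and> B\<close>, axiom K gives
  \<open>Box X \<rightarrow> Box B\<close>, so \<open>B\<close> entails \<open>Box X \<rightarrow> X\<close>, hence \<open>X\<close> by the Loeb axiom.\<close>
lemma derives_Box:
  assumes "derives T B"
  shows "derives T (Box B)"
proof -
  define X where "X = And (Box B) B"
  have "KM_LC (Imp (Box X) (Box B))"
    unfolding X_def by (rule mp[OF ax_boxK nec[OF ax_and2]])
  then have "derives (insert (Box X) T) (Box B)"
    by (blast intro: derives.intros)
  moreover have "derives (insert (Box X) T) B"
    using assms derives_mono by blast
  ultimately have "derives (insert (Box X) T) X"
    unfolding X_def by (blast intro: derives.intros ax_andI)
  then have "derives T (Imp (Box X) X)" by (rule derives_deduction)
  then have "derives T X" by (blast intro: derives.intros ax_loeb)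
  then show ?thesis unfolding X_def by (blast intro: derives.intros ax_and1)
qed

section \<open>Prime theories\<close>

locale prime_theory =
  fixes F :: "fm set"
  assumes closed: "derives F B \<Longrightarrow> B \<in> F"
    and prime: "Or B C \<in> F \<Longrightarrow> B \<in> F \<or> C \<in> F"

lemma maximal_extension:
  assumes "\<not> derives T A"
  obtains M where "T \<subseteq> M" "\<not> derives M A" "\<And>B. B \<notin> M \<Longrightarrow> derives (insert B M) A"
proof -
  let ?\<A> = "{T'. T \<subseteq> T' \<and> \<not> derives T' A}"
  have "\<exists>M\<in>?\<A>. \<forall>X\<in>?\<A>. M \<subseteq> X \<longrightarrow> X = M"
  proof (rule subset_Zorn_nonempty)
    show "?\<A> \<noteq> {}" using assms by blast
  next
    fix \<C> assume "\<C> \<noteq> {}" and chain: "subset.chain ?\<A> \<C>"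
    have "\<not> derives (\<Union>\<C>) A"
    proof
      assume "derives (\<Union>\<C>) A"
      then obtain T' where "finite T'" "T' \<subseteq> \<Union>\<C>" "derives T' A"
        using derives_compact by blast
      moreover obtain X where "X \<in> \<C>" "T' \<subseteq> X"
        by (rule finite_subset_Union_chain[OF \<open>finite T'\<close> \<open>T' \<subseteq> \<Union>\<C>\<close> \<open>\<C> \<noteq> {}\<close> chain])
      ultimately have "derives X A" using derives_mono by blast
      with \<open>X \<in> \<C>\<close> chain show False unfolding subset.chain_def by blast
    qed
    moreover have "T \<subseteq> \<Union>\<C>"
      using \<open>\<C> \<noteq> {}\<close> chain unfolding subset.chain_def by blast
    ultimately show "\<Union>\<C> \<in> ?\<A>" by blast
  qed
  then obtain M where M: "M \<in> ?\<A>" and maximal: "\<forall>X\<in>?\<A>. M \<subseteq> X \<longrightarrow> X = M"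
    by blast
  from M have "T \<subseteq> M" and "\<not> derives M A" by simp_all
  moreover have "derives (insert B M) A" if "B \<notin> M" for B
  proof (rule ccontr)
    assume "\<not> derives (insert B M) A"
    with \<open>T \<subseteq> M\<close> have "insert B M \<in> ?\<A>" by blast
    with maximal have "insert B M = M" by blast
    with that show False by blast
  qed
  ultimately show thesis by (rule that)
qed

lemma prime_theoryI:
  assumes not_A: "\<not> derives M A" and refutes: "\<And>B. B \<notin> M \<Longrightarrow> derives M (Imp B A)"
  shows "prime_theory M"
proof
  show "B \<in> M" if "derives M B" for B
  proof (rule ccontr)
    assume "B \<notin> M"
    with that not_A show False using derives_mp[OF refutes] by blast
  qed
  show "B \<in> M \<or> C \<in> M" if "Or B C \<in> M" for B C
  proof (rule ccontr)
    assume "\<not> (B \<in> M \<or> C \<in> M)"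
    then have "derives M (Imp B A)" "derives M (Imp C A)" using refutes by blast+
    then have "derives M A"
      using derives_mp[OF derives_mp[OF derives_mp[OF derives_thm[OF ax_orE]]] derives_hyp[OF that]]
      by blast
    with not_A show False ..
  qed
qed

lemma prime_theory_extension:
  assumes "\<not> derives T A"
  obtains F where "T \<subseteq> F" "prime_theory F" "A \<notin> F"
proof -
  obtain M where "T \<subseteq> M" "\<not> derives M A" "\<And>B. B \<notin> M \<Longrightarrow> derives (insert B M) A"
    using maximal_extension[OF assms] by blast
  moreover from this have "prime_theory M" by (blast intro: prime_theoryI derives_deduction)
  moreover have "A \<notin> M" using \<open>\<not> derives M A\<close> derives_hyp by blast
  ultimately show thesis using that by blast
qed

context prime_theory
begin

lemma KM_LC_in: "KM_LC B \<Longrightarrow> B \<in> F"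
  by (intro closed derives_thm)

lemma Imp_in: "derives (insert B F) C \<Longrightarrow> Imp B C \<in> F"
  by (intro closed derives_deduction)

lemma mp_in: "Imp B C \<in> F \<Longrightarrow> B \<in> F \<Longrightarrow> C \<in> F"
  by (rule closed, rule derives_mp[OF derives_hyp derives_hyp])

lemma derives_member: "B \<in> F \<Longrightarrow> derives (insert D F) B"
  by (simp add: derives_hyp)

lemma derives_inserted: "derives (insert D F) D"
  by (simp add: derives_hyp)

definition leq :: "fm \<Rightarrow> fm \<Rightarrow> bool" (infix \<open>\<preceq>\<close> 50) where
  "B \<preceq> C \<longleftrightarrow> Imp B C \<in> F"

lemma leqI: "derives (insert B F) C \<Longrightarrow> B \<preceq> C"
  unfolding leq_def by (rule Imp_in)

lemma derives_leq:
  assumes "B \<preceq> C" and "derives T B" and "F \<subseteq> T"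
  shows "derives T C"
proof -
  have "Imp B C \<in> T" using assms(1,3) unfolding leq_def by blast
  from derives_mp[OF derives_hyp[OF this] assms(2)] show ?thesis .
qed

lemma leq_of_theorem: "KM_LC (Imp B C) \<Longrightarrow> B \<preceq> C"
  unfolding leq_def by (rule KM_LC_in)

lemma leq_refl: "B \<preceq> B"
  by (rule leq_of_theorem[OF KM_LC_Imp_refl])

lemma leq_trans:
  assumes "B \<preceq> C" and "C \<preceq> D"
  shows "B \<preceq> D"
  by (rule leqI, rule derives_leq[OF assms(2) derives_leq[OF assms(1) derives_inserted]]) auto

lemma leq_total: "B \<preceq> C \<or> C \<preceq> B"
  unfolding leq_def by (rule prime[OF KM_LC_in[OF ax_LC]])

lemma member_leq: "B \<in> F \<Longrightarrow> B \<preceq> C \<Longrightarrow> C \<in> F"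
  unfolding leq_def using mp_in by blast

lemma leq_member: "C \<in> F \<Longrightarrow> B \<preceq> C"
  by (rule leqI, rule derives_member)

lemma Bot_leq: "Bot \<preceq> B"
  by (rule leq_of_theorem[OF ax_bot])

lemma And_leq1: "And B C \<preceq> B"
  by (rule leq_of_theorem[OF ax_and1])

lemma And_leq2: "And B C \<preceq> C"
  by (rule leq_of_theorem[OF ax_and2])

lemma leq_And:
  assumes "D \<preceq> B" and "D \<preceq> C"
  shows "D \<preceq> And B C"
proof (rule leqI)
  have "derives (insert D F) B" "derives (insert D F) C"
    using assms by (auto intro: derives_leq[OF _ derives_inserted])
  then show "derives (insert D F) (And B C)"
    by (rule derives_mp[OF derives_mp[OF derives_thm[OF ax_andI]]])
qed

lemma leq_Or1: "B \<preceq> Or B C"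
  by (rule leq_of_theorem[OF ax_or1])

lemma leq_Or2: "C \<preceq> Or B C"
  by (rule leq_of_theorem[OF ax_or2])

lemma Or_leq:
  assumes "B \<preceq> D" and "C \<preceq> D"
  shows "Or B C \<preceq> D"
proof (rule leqI)
  have "derives (insert (Or B C) F) (Imp B D)" "derives (insert (Or B C) F) (Imp C D)"
    using assms unfolding leq_def by (auto intro: derives_member)
  then show "derives (insert (Or B C) F) D"
    by (rule derives_mp[OF derives_mp[OF derives_mp[OF derives_thm[OF ax_orE]]] derives_inserted])
qed

lemma leq_Imp: "C \<preceq> Imp B C"
  by (rule leq_of_theorem[OF ax_K1])

lemma Imp_leq:
  assumes "\<not> B \<preceq> C"
  shows "Imp B C \<preceq> C"
proof (cases "Imp B C \<preceq> B")
  case True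
  show ?thesis
    by (rule leqI, rule derives_mp[OF derives_inserted derives_leq[OF True derives_inserted]]) auto
next
  case False
  then have "B \<preceq> Imp B C" using leq_total by blast
  then have "derives (insert B F) (Imp B C)"
    by (rule derives_leq[OF _ derives_inserted]) auto
  then have "B \<preceq> C" by (rule leqI[OF derives_mp[OF _ derives_inserted]])
  with assms show ?thesis ..
qed

lemma leq_Box: "B \<preceq> Box B"
  by (rule leqI, rule derives_Box, rule derives_inserted)

lemma Box_not_leq: "B \<notin> F \<Longrightarrow> \<not> Box B \<preceq> B"
  unfolding leq_def using mp_in[OF KM_LC_in[OF ax_loeb]] by blast

lemma Box_leq:
  assumes "B \<preceq> D" and "\<not> D \<preceq> B"
  shows "Box B \<preceq> D"
proof (rule leqI)
  have "Imp (Imp D B) D \<in> F"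
    using leq_trans[OF Imp_leq[OF assms(2)] assms(1)] unfolding leq_def .
  moreover have "Imp D D \<in> F" using leq_refl unfolding leq_def .
  moreover have "derives (insert (Box B) F) (Or (Imp D B) D)"
    by (rule derives_mp[OF derives_thm[OF ax_KM] derives_inserted])
  ultimately show "derives (insert (Box B) F) D"
    using derives_mp[OF derives_mp[OF derives_mp[OF derives_thm[OF ax_orE]]]] derives_member
    by blast
qed

end

section \<open>Heights and the countermodel\<close>

primrec subformulas :: "fm \<Rightarrow> fm set" where
  "subformulas (Var p) = {Var p}"
| "subformulas Bot = {Bot}"
| "subformulas (Imp A B) = insert (Imp A B) (subformulas A \<union> subformulas B)"
| "subformulas (And A B) = insert (And A B) (subformulas A \<union> subformulas B)"
| "subformulas (Or A B) = insert (Or A B) (subformulas A \<union> subformulas B)"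
| "subformulas (Box A) = insert (Box A) (subformulas A)"

lemma finite_subformulas: "finite (subformulas A)"
  by (induction A) auto

lemma subformulas_self: "A \<in> subformulas A"
  by (cases A) auto

locale prime_theory_fragment = prime_theory +
  fixes X :: "fm set"
  assumes finite_fragment: "finite X"
begin

definition leq_class :: "fm \<Rightarrow> fm set" where
  "leq_class B = {D \<in> X. D \<preceq> B \<and> B \<preceq> D}"

definition strictly_below :: "fm \<Rightarrow> fm set" where
  "strictly_below B = {D \<in> X. \<not> B \<preceq> D}"

definition height :: "fm \<Rightarrow> nat" where
  "height B = card (leq_class ` strictly_below B)"

definition top_height :: nat where
  "top_height = card (leq_class ` {D \<in> X. D \<notin> F})"

lemma finite_classes_below: "finite (leq_class ` strictly_below B)"
  unfolding strictly_below_def using finite_fragment by simp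

lemma leq_class_eq: "B \<preceq> D \<Longrightarrow> D \<preceq> B \<Longrightarrow> leq_class B = leq_class D"
  unfolding leq_class_def using leq_trans by blast

lemma leq_class_notin_below: "B \<in> X \<Longrightarrow> leq_class B \<notin> leq_class ` strictly_below B"
  unfolding strictly_below_def leq_class_def using leq_refl by blast

lemma strictly_below_mono: "B \<preceq> C \<Longrightarrow> strictly_below B \<subseteq> strictly_below C"
  unfolding strictly_below_def using leq_trans by blast

lemma strictly_below_subset: "strictly_below B \<subseteq> {D \<in> X. D \<notin> F}"
  unfolding strictly_below_def using leq_member by blast

lemma strictly_below_member: "B \<in> F \<Longrightarrow> strictly_below B = {D \<in> X. D \<notin> F}"
  unfolding strictly_below_def using leq_member member_leq by blast

lemma height_mono: "B \<preceq> C \<Longrightarrow> height B \<le> height C"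
  unfolding height_def by (intro card_mono finite_classes_below image_mono strictly_below_mono)

lemma height_cong: "B \<preceq> C \<Longrightarrow> C \<preceq> B \<Longrightarrow> height B = height C"
  using height_mono le_antisym by blast

lemma height_strict:
  assumes "C \<in> X" and "\<not> B \<preceq> C"
  shows "height C < height B"
proof -
  have "C \<preceq> B" using assms(2) leq_total by blast
  then have "leq_class ` strictly_below C \<subseteq> leq_class ` strictly_below B"
    by (intro image_mono strictly_below_mono)
  moreover have "leq_class C \<in> leq_class ` strictly_below B"
    using assms unfolding strictly_below_def by blast
  ultimately have "leq_class ` strictly_below C \<subset> leq_class ` strictly_below B"
    using leq_class_notin_below[OF assms(1)] by blast
  then show ?thesis unfolding height_def by (intro psubset_card_mono finite_classes_below)
qed

lemma height_le_top: "height B \<le> top_height"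
  unfolding height_def top_height_def using finite_fragment strictly_below_subset
  by (intro card_mono image_mono) auto

lemma height_member: "B \<in> F \<Longrightarrow> height B = top_height"
  unfolding height_def top_height_def by (simp add: strictly_below_member)

lemma height_less_top:
  assumes "B \<in> X" and "B \<notin> F"
  shows "height B < top_height"
proof -
  have "insert (leq_class B) (leq_class ` strictly_below B) \<subseteq> leq_class ` {D \<in> X. D \<notin> F}"
    using assms strictly_below_subset by blast
  then have "card (insert (leq_class B) (leq_class ` strictly_below B)) \<le> top_height"
    unfolding top_height_def using finite_fragment by (intro card_mono) auto
  then show ?thesis
    using leq_class_notin_below[OF assms(1)] finite_classes_below unfolding height_def by simp
qed

lemma height_Bot: "height Bot = 0"
  unfolding height_def strictly_below_def using Bot_leq by simp

lemma height_And: "height (And B C) = min (height B) (height C)"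
proof (cases "B \<preceq> C")
  case True
  then have "height (And B C) = height B"
    by (intro height_cong And_leq1 leq_And leq_refl)
  with height_mono[OF True] show ?thesis by (simp add: min.absorb1)
next
  case False
  then have "C \<preceq> B" using leq_total by blast
  then have "height (And B C) = height C"
    by (intro height_cong And_leq2 leq_And leq_refl)
  with height_mono[OF \<open>C \<preceq> B\<close>] show ?thesis by (simp add: min.absorb2)
qed

lemma height_Or: "height (Or B C) = max (height B) (height C)"
proof (cases "B \<preceq> C")
  case True
  then have "height (Or B C) = height C"
    by (intro height_cong Or_leq leq_Or2 leq_refl)
  with height_mono[OF True] show ?thesis by (simp add: max.absorb2)
next
  case False
  then have "C \<preceq> B" using leq_total by blast
  then have "height (Or B C) = height B"
    by (intro height_cong Or_leq leq_Or1 leq_refl)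
  with height_mono[OF \<open>C \<preceq> B\<close>] show ?thesis by (simp add: max.absorb1)
qed

lemma height_Imp:
  assumes "C \<in> X"
  shows "height (Imp B C) = (if height B \<le> height C then top_height else height C)"
proof (cases "B \<preceq> C")
  case True
  then have "Imp B C \<in> F" unfolding leq_def .
  with height_mono[OF True] show ?thesis by (simp add: height_member)
next
  case False
  then have "height (Imp B C) = height C"
    by (intro height_cong Imp_leq leq_Imp)
  with height_strict[OF assms False] show ?thesis by simp
qed

lemma height_Box:
  assumes "B \<in> X"
  shows "height (Box B) = min top_height (Suc (height B))"
proof (cases "B \<in> F")
  case True
  then have "Box B \<in> F" using member_leq leq_Box by blast
  with True show ?thesis by (simp add: height_member)
next
  case False
  have "leq_class ` strictly_below (Box B) = insert (leq_class B) (leq_class ` strictly_below B)"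
  proof
    show "leq_class ` strictly_below (Box B) \<subseteq> insert (leq_class B) (leq_class ` strictly_below B)"
    proof
      fix E assume "E \<in> leq_class ` strictly_below (Box B)"
      then obtain D where "D \<in> X" "\<not> Box B \<preceq> D" "E = leq_class D"
        unfolding strictly_below_def by blast
      then show "E \<in> insert (leq_class B) (leq_class ` strictly_below B)"
        using Box_leq leq_class_eq unfolding strictly_below_def by blast
    qed
    have "B \<in> strictly_below (Box B)"
      using assms Box_not_leq[OF False] unfolding strictly_below_def by blast
    then show "insert (leq_class B) (leq_class ` strictly_below B)
        \<subseteq> leq_class ` strictly_below (Box B)"
      using strictly_below_mono[OF leq_Box] by blast
  qed
  then have "height (Box B) = Suc (height B)"
    using leq_class_notin_below[OF assms] finite_classes_below unfolding height_def by simp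
  with height_le_top[of "Box B"] show ?thesis by simp
qed

definition height_valuation :: "nat \<Rightarrow> nat set" where
  "height_valuation p = {..<height (Var p)}"

lemma valuation_height_valuation: "omega.valuation height_valuation"
  unfolding height_valuation_def upset_def omega_le_def by auto

lemma sem_height_valuation:
  "subformulas B \<subseteq> X \<Longrightarrow> sem_omega height_valuation B \<inter> {..<top_height} = {..<height B}"
proof (induction B)
  case (Var p)
  show ?case using height_le_top[of "Var p"] by (auto simp: height_valuation_def)
next
  case Bot
  show ?case by (simp add: height_Bot)
next
  case (Imp B C)
  then have "C \<in> X" using subformulas_self by auto
  with Imp show ?case unfolding height_Imp[OF \<open>C \<in> X\<close>]
    by (intro sem_omega_Imp_initial) auto
next
  case (And B C)
  then show ?case unfolding height_And by (intro sem_omega_And_initial) auto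
next
  case (Or B C)
  then show ?case unfolding height_Or by (intro sem_omega_Or_initial) auto
next
  case (Box B)
  then have "B \<in> X" using subformulas_self by auto
  with Box show ?case unfolding height_Box[OF \<open>B \<in> X\<close>]
    by (intro sem_omega_Box_initial) auto
qed

lemma not_valid_if_not_member:
  assumes "subformulas B \<subseteq> X" and "B \<notin> F"
  shows "\<not> valid_in omega_le omega_R B"
proof
  assume "valid_in omega_le omega_R B"
  then have "sem_omega height_valuation B = UNIV"
    using valuation_height_valuation unfolding valid_in_def by blast
  with sem_height_valuation[OF assms(1)] have "height B = top_height" by simp
  moreover have "height B < top_height"
    using assms subformulas_self height_less_top by blast
  ultimately show False by simp
qed

end

lemma KM_LC_complete:
  assumes "valid_in omega_le omega_R A"
  shows "KM_LC A"
proof (rule ccontr)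
  assume "\<not> KM_LC A"
  then obtain F where "prime_theory F" "A \<notin> F"
    using prime_theory_extension[of "{}" A] derives_empty_iff by blast
  then interpret prime_theory_fragment F "subformulas A"
    by (intro prime_theory_fragment.intro prime_theory_fragment_axioms.intro finite_subformulas)
  show False using not_valid_if_not_member[OF subset_refl \<open>A \<notin> F\<close>] assms by blast
qed

theorem theorem5p16:
  shows "KM_LC A \<longleftrightarrow> valid_in omega_le omega_R A"
  using KM_LC_sound KM_LC_complete by blast

end
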